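(* For any $n\geq 2$ there is a subset $\mathbf{\Pi}$ of permutations on $[n]$ with $|\mathbf{\Pi}|\leq C_0^n$, where $C_0>0$ is a universal constant, having the following property. Let $p\in(0,1/2]$, $\delta\in[1/n,1/2]$, $s\in[-1,0]$, $\nu\in(0,1]$, $L\geq 1$, $T>0$, and let $x\in{\rm Incomp}_n(\delta,\nu)$ be such that $T/2\leq \mathcal{T}_p(x,L)\leq T$. Then there is $\sigma=\sigma(x)\in\mathbf{\Pi}$ such that the vector $\big(\mathbf{Y}_{\sigma(i)}(p,x,L,s)\big)_{i=1}^n$ belongs to $\mathcal A(n,\delta,\nu,T)$.
   Context: Notation and definitions. For $\delta,\nu\in(0,1]$, ${\rm Comp}_n(\delta,\nu)$ is the set of unit vectors $x\in\mathbb{R}^n$ for which there is $y\in\mathbb{R}^n$ with at most $\delta n$ nonzero coordinates and $\|x-y\|_2\leq\nu$; ${\rm Incomp}_n(\delta,\nu):=S^{n-1}\setminus{\rm Comp}_n(\delta,\nu)$. The Lévy concentration function of a real random variable $Z$ is $\mathcal L(Z,t)=\sup_{\lambda\in\mathbb{R}}\mathbb{P}\{|Z-\lambda|\leq t\}$. For $p\in(0,1/2]$, $x\in S^{n-1}$ and $L>0$, the threshold $\mathcal{T}_p(x,L)$ is the supremum of all $t\in(0,1]$ such that $\mathcal L\big(\sum_{i=1}^n b_ix_i,t\big)>Lt$, where $b_1,\dots,b_n$ are independent Bernoulli($p$) random variables (taking value $1$ with probability $p$ and $0$ with probability $1-p$). For $p\in(0,1/2]$, $s\in[-1,0]$, $x\in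 S^{n-1}$, $L\geq1$, $\mathbf{Y}(p,x,L,s)\in\mathbb{Z}^n$ denotes a fixed (chosen once for each $(p,x,L,s)$) integer vector satisfying, with universal constants $C_1,c_1>0$: (a) $\big\|\frac{\sqrt n}{\mathcal{T}_p(x,L)}x-\mathbf{Y}(p,x,L,s)\big\|_\infty\leq1$; (b) $\mathbb{P}\{|\sum_i b_i\mathbf{Y}_i(p,x,L,s)+\frac{s\sqrt n}{\mathcal{T}_p(x,L)}\sum_i x_i|\leq t\}\leq \frac{C_1L\mathcal{T}_p(x,L)}{\sqrt n}t$ for all $t\geq\sqrt n$; (c) $\mathcal L(\sum_i b_i\mathbf{Y}_i(p,x,L,s),\sqrt n)\geq c_1L\mathcal{T}_p(x,L)$; (d) $\big|\frac{\sqrt n}{\mathcal{T}_p(x,L)}\sum_i x_i-\sum_i\mathbf{Y}_i(p,x,L,s)\big|\leq C_1\sqrt n$. (Such a vector exists by a randomized rounding argument.) For $n\geq2$, $\delta\in[1/n,1/2]$, $\nu\in(0,1]$ and $T\in(0,1]$ with $\nu/T\geq2$, the set $\mathcal A(n,\delta,\nu,T)=A_1\times\dots\times A_n\subset\mathbb{Z}^n$ is defined by: for $1\leq j\leq\log_2(\delta n)$ and $2^{-j}\delta n<i\leq2^{-j+1}\delta n$, $A_i:=\mathbb{Z}\cap\big[-\lceil\frac{2^{(j+3)/2}}{\sqrt\delta\,T}\rceil-1,\lceil\frac{2^{(j+3)/2}}{\sqrt\delta\,T}\rceil+1\big]\setminus\big[1-\lfloor\frac{\nu}{T}\rfloor,\lfloor\frac{\nu}{T}\rfloor-1\big]$;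 for $i>\delta n$, $A_i:=\mathbb{Z}\cap\big[-\lceil\frac{\sqrt8}{\sqrt\delta\,T}\rceil-1,\lceil\frac{\sqrt8}{\sqrt\delta\,T}\rceil+1\big]$; and $A_1:=\mathbb{Z}\cap\big[-\lceil\frac{2\sqrt n}{T}\rceil-1,\lceil\frac{2\sqrt n}{T}\rceil+1\big]\setminus\big[1-\lfloor\frac{\nu}{T}\rfloor,\lfloor\frac{\nu}{T}\rfloor-1\big]$. *)

theory Defs
  imports "HOL-Probability.Probability"
begin

text \<open>Vectors in R^n are functions nat => real, indexed by {1..n}.\<close>

definition unit_sphere :: "nat \<Rightarrow> (nat \<Rightarrow> real) set" where
  "unit_sphere n = {x. (\<forall>i. i \<notin> {1..n} \<longrightarrow> x i = 0) \<and> (\<Sum>i\<in>{1..n}. (x i)^2) = 1}"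

definition Comp :: "nat \<Rightarrow> real \<Rightarrow> real \<Rightarrow> (nat \<Rightarrow> real) set" where
  "Comp n \<delta> \<nu> = {x \<in> unit_sphere n. \<exists>y::nat \<Rightarrow> real.
      real (card {i\<in>{1..n}. y i \<noteq> 0}) \<le> \<delta> * real n \<and>
      sqrt (\<Sum>i\<in>{1..n}. (x i - y i)^2) \<le> \<nu>}"

definition Incomp :: "nat \<Rightarrow> real \<Rightarrow> real \<Rightarrow> (nat \<Rightarrow> real) set" where
  "Incomp n \<delta> \<nu> = unit_sphere n - Comp n \<delta> \<nu>"

definition levy_conc :: "real pmf \<Rightarrow> real \<Rightarrow> real" where
  "levy_conc M t = (SUP c::real. measure_pmf.prob M {z. \<bar>z - c\<bar> \<le> t})"

definition bern_sum :: "nat \<Rightarrow> real \<Rightarrow> (nat \<Rightarrow> real) \<Rightarrow> real pmf" where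
  "bern_sum n p v = map_pmf (\<lambda>b. \<Sum>i\<in>{1..n}. (if b i then v i else 0))
      (Pi_pmf {1..n} False (\<lambda>_. bernoulli_pmf p))"

definition threshold :: "nat \<Rightarrow> real \<Rightarrow> (nat \<Rightarrow> real) \<Rightarrow> real \<Rightarrow> real" where
  "threshold n p x L = Sup {t. 0 < t \<and> t \<le> 1 \<and> levy_conc (bern_sum n p x) t > L * t}"

text \<open>Properties (a)-(d) of the integer vector Y(p,x,L,s), with constants C1, c1.
  Y n p x L s is the vector for x in R^n.\<close>
definition Y_props :: "real \<Rightarrow> real \<Rightarrow>
    (nat \<Rightarrow> real \<Rightarrow> (nat \<Rightarrow> real) \<Rightarrow> real \<Rightarrow> real \<Rightarrow> (nat \<Rightarrow> int)) \<Rightarrow> bool" where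
  "Y_props C1 c1 Y \<longleftrightarrow>
    (\<forall>n p x L s. 0 < p \<and> p \<le> 1/2 \<and> -1 \<le> s \<and> s \<le> 0 \<and> x \<in> unit_sphere n \<and> L \<ge> 1 \<longrightarrow>
      (let T = threshold n p x L; Yv = Y n p x L s in
        (\<forall>i\<in>{1..n}. \<bar>sqrt n / T * x i - of_int (Yv i)\<bar> \<le> 1) \<and>
        (\<forall>t \<ge> sqrt n. measure_pmf.prob (bern_sum n p (\<lambda>i. of_int (Yv i)))
             {z. \<bar>z + s * sqrt n / T * (\<Sum>i\<in>{1..n}. x i)\<bar> \<le> t}
           \<le> C1 * L * T / sqrt n * t) \<and>
        levy_conc (bern_sum n p (\<lambda>i. of_int (Yv i))) (sqrt n) \<ge> c1 * L * T \<and>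
        \<bar>sqrt n / T * (\<Sum>i\<in>{1..n}. x i) - (\<Sum>i\<in>{1..n}. of_int (Yv i))\<bar> \<le> C1 * sqrt n))"

definition in_A :: "nat \<Rightarrow> real \<Rightarrow> real \<Rightarrow> real \<Rightarrow> (nat \<Rightarrow> int) \<Rightarrow> bool" where
  "in_A n \<delta> \<nu> T y \<longleftrightarrow> (\<forall>i\<in>{1..n}.
     (let k = \<lfloor>\<nu> / T\<rfloor>; excl = (y i \<ge> 1 - k \<and> y i \<le> k - 1) in
      if i = 1 then
        (let B = \<lceil>2 * sqrt n / T\<rceil> + 1 in \<bar>y i\<bar> \<le> B \<and> \<not> excl)
      else if real i > \<delta> * real n then
        \<bar>y i\<bar> \<le> \<lceil>sqrt 8 / (sqrt \<delta> * T)\<rceil> + 1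
      else
        (\<exists>j::nat. 1 \<le> j \<and> real j \<le> log 2 (\<delta> * real n) \<and>
           \<delta> * real n / 2^j < real i \<and> real i \<le> \<delta> * real n / 2^(j-1) \<and>
           \<bar>y i\<bar> \<le> \<lceil>2 powr ((real j + 3)/2) / (sqrt \<delta> * T)\<rceil> + 1 \<and> \<not> excl)))"

end

theory Submission
  imports Defs
begin

(* Sort the coordinates of x by decreasing modulus with a permutation tau. The coordinate of
   rank r satisfies r * x (tau r)^2 <= 1, and by incompressibility the first k = floor (delta * n)
   of them exceed nu / sqrt n; through property (a) of Y these two facts give every constraint
   of A(n, delta, nu, T). Both survive when tau is replaced by any sigma with
   sigma {1..e} = tau {1..e} for all e in E = {powers of two <= n} + {k, n}: the prefix of length
   k is unchanged, and every coordinate moves to a position at most twice its rank. So one sigma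
   per chain (tau {1..e}) for e in E suffices. Coding each set of the chain by the ranks of its
   elements inside the next set of the chain shows that there are at most
   2^(sum of the successors in E) <= 2^(8n) chains for each of the n values of k, hence at most
   512^n permutations. *)

lemma permutes_sorting:
  fixes f :: "nat \<Rightarrow> 'a::linorder"
  obtains \<tau> where "\<tau> permutes {1..n}" "mono_on {1..n} (\<lambda>r. f (\<tau> r))"
proof
  define xs where "xs = sort_key f [1..<Suc n]"
  have len: "length xs = n" and sorted: "sorted (map f xs)"
    by (simp_all add: xs_def)
  define \<tau> where "\<tau> r = (if r \<in> {1..n} then xs ! (r - 1) else r)" for r
  have "bij_betw (\<lambda>r. r - 1) {1..n} {..<length xs}"
    by (rule bij_betwI[where g = Suc]) (auto simp: len)
  moreover have "bij_betw ((!) xs) {..<length xs} {1..n}"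
    by (rule bij_betw_nth) (auto simp: xs_def)
  ultimately have "bij_betw \<tau> {1..n} {1..n}"
    by (rule bij_betw_trans[THEN bij_betw_cong[THEN iffD1, rotated]]) (simp add: \<tau>_def)
  then show "\<tau> permutes {1..n}"
    by (rule bij_imp_permutes) (auto simp: \<tau>_def)
  show "mono_on {1..n} (\<lambda>r. f (\<tau> r))"
  proof (rule mono_onI)
    fix r r' assume "r \<in> {1..n}" "r' \<in> {1..n}" "r \<le> r'"
    then show "f (\<tau> r) \<le> f (\<tau> r')"
      using sorted_nth_mono[OF sorted, of "r - 1" "r' - 1"] len by (simp add: \<tau>_def)
  qed
qed

definition prefix_images :: "(nat \<Rightarrow> nat) \<Rightarrow> nat set \<Rightarrow> nat \<Rightarrow> nat set" where
  "prefix_images \<tau> E = restrict (\<lambda>e. \<tau> ` {1..e}) E"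

definition prefix_chains :: "nat \<Rightarrow> nat set \<Rightarrow> (nat \<Rightarrow> nat set) set" where
  "prefix_chains n E = (\<lambda>\<tau>. prefix_images \<tau> E) ` {\<tau>. \<tau> permutes {1..n}}"

definition succ_in :: "nat set \<Rightarrow> nat \<Rightarrow> nat" where
  "succ_in E e = Min {e' \<in> E. e < e'}"

definition rank_in :: "nat set \<Rightarrow> nat \<Rightarrow> nat" where
  "rank_in U c = card {u \<in> U. u \<le> c}"

definition chain_code :: "nat \<Rightarrow> nat set \<Rightarrow> (nat \<Rightarrow> nat set) \<Rightarrow> nat \<Rightarrow> nat set" where
  "chain_code n E W = (\<lambda>e \<in> E - {n}. rank_in (W (succ_in E e)) ` W e)"

lemma rank_in_strict_mono:
  assumes "finite U"
  shows "strict_mono_on U (rank_in U)"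
proof (rule strict_mono_onI)
  fix a b assume "a \<in> U" "b \<in> U" "a < b"
  then have "b \<in> {u \<in> U. u \<le> b} - {u \<in> U. u \<le> a}" by auto
  then have "{u \<in> U. u \<le> a} \<subset> {u \<in> U. u \<le> b}" by auto
  then show "rank_in U a < rank_in U b"
    unfolding rank_in_def using assms by (intro psubset_card_mono) auto
qed

lemma rank_in_range:
  assumes "finite U" "c \<in> U"
  shows "rank_in U c \<in> {1..card U}"
proof -
  have "c \<in> {u \<in> U. u \<le> c}" using assms by auto
  then show ?thesis
    unfolding rank_in_def using assms by (auto simp: Suc_le_eq card_gt_0_iff intro: card_mono)
qed

lemma succ_in_successor:
  assumes "finite E" "n \<in> E" "e < n"
  shows "succ_in E e \<in> E" "e < succ_in E e" "\<And>e'. e' \<in> E \<Longrightarrow> e < e' \<Longrightarrow> succ_in E e \<le> e'"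
proof -
  have fin: "finite {e' \<in> E. e < e'}" and ne: "{e' \<in> E. e < e'} \<noteq> {}"
    using assms by auto
  show "succ_in E e \<in> E" "e < succ_in E e"
    using Min_in[OF fin ne] unfolding succ_in_def by auto
  show "\<And>e'. e' \<in> E \<Longrightarrow> e < e' \<Longrightarrow> succ_in E e \<le> e'"
    unfolding succ_in_def using fin by (intro Min_le) auto
qed

lemma chain_code_inj:
  assumes E: "E \<subseteq> {1..n}" "n \<in> E"
  shows "inj_on (chain_code n E) (prefix_chains n E)"
proof (rule inj_onI)
  fix W\<^sub>1 W\<^sub>2
  assume "W\<^sub>1 \<in> prefix_chains n E" "W\<^sub>2 \<in> prefix_chains n E"
  then obtain \<tau>\<^sub>1 \<tau>\<^sub>2 where \<tau>: "\<tau>\<^sub>1 permutes {1..n}" "\<tau>\<^sub>2 permutes {1..n}"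
    and W: "W\<^sub>1 = prefix_images \<tau>\<^sub>1 E" "W\<^sub>2 = prefix_images \<tau>\<^sub>2 E"
    unfolding prefix_chains_def by blast
  assume "chain_code n E W\<^sub>1 = chain_code n E W\<^sub>2"
  then have code: "chain_code n E (prefix_images \<tau>\<^sub>1 E) = chain_code n E (prefix_images \<tau>\<^sub>2 E)"
    by (simp only: W)
  have fin: "finite E" using E finite_subset by blast
  have "\<tau>\<^sub>1 ` {1..e} = \<tau>\<^sub>2 ` {1..e}" if "e \<in> E" for e
    using that
  proof (induction "n - e" arbitrary: e rule: less_induct)
    case less
    show ?case
    proof (cases "e = n")
      case True
      then show ?thesis using \<tau> by (simp add: permutes_image)
    next
      case False
      with less.prems E have "e < n" by auto
      note succ = succ_in_successor[OF fin E(2) this]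
      have "succ_in E e \<le> n" using succ(1) E by auto
      define U where "U = \<tau>\<^sub>1 ` {1..succ_in E e}"
      have U: "U = \<tau>\<^sub>2 ` {1..succ_in E e}"
        unfolding U_def using \<open>e < n\<close> \<open>succ_in E e \<le> n\<close> succ by (intro less.hyps) auto
      have "rank_in (\<tau>\<^sub>1 ` {1..succ_in E e}) ` \<tau>\<^sub>1 ` {1..e}
          = rank_in (\<tau>\<^sub>2 ` {1..succ_in E e}) ` \<tau>\<^sub>2 ` {1..e}"
        using fun_cong[OF code, of e] less.prems False succ(1)
        by (simp add: chain_code_def prefix_images_def)
      then have "rank_in U ` \<tau>\<^sub>1 ` {1..e} = rank_in U ` \<tau>\<^sub>2 ` {1..e}"
        unfolding U_def[symmetric] U[symmetric] .
      moreover have prefix: "{1..e} \<subseteq> {1..succ_in E e}" using succ(2) by auto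
      then have "\<tau>\<^sub>1 ` {1..e} \<subseteq> U" unfolding U_def by (fact image_mono)
      moreover have "\<tau>\<^sub>2 ` {1..e} \<subseteq> U" unfolding U using prefix by (fact image_mono)
      ultimately show ?thesis
        using inj_on_image_eq_iff[OF strict_mono_on_imp_inj_on[OF rank_in_strict_mono]]
        by (simp add: U_def)
    qed
  qed
  then show "W\<^sub>1 = W\<^sub>2"
    unfolding W prefix_images_def by (intro restrict_ext)
qed

lemma chain_code_in_PiE:
  assumes E: "E \<subseteq> {1..n}" "n \<in> E" and \<tau>: "\<tau> permutes {1..n}"
  shows "chain_code n E (prefix_images \<tau> E) \<in> (\<Pi>\<^sub>E e \<in> E - {n}. Pow {1..succ_in E e})"
proof -
  have fin: "finite E" using E finite_subset by blast
  have "succ_in E e \<in> E \<and> rank_in (\<tau> ` {1..succ_in E e}) ` \<tau> ` {1..e} \<subseteq> {1..succ_in E e}"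
    if e: "e \<in> E - {n}" for e
  proof
    from e E have "e < n" by auto
    note succ = succ_in_successor[OF fin E(2) this]
    show "succ_in E e \<in> E" by (fact succ(1))
    have "card (\<tau> ` {1..succ_in E e}) = succ_in E e"
      using \<tau> by (simp add: card_image permutes_inj_on)
    then show "rank_in (\<tau> ` {1..succ_in E e}) ` \<tau> ` {1..e} \<subseteq> {1..succ_in E e}"
      using rank_in_range[of "\<tau> ` {1..succ_in E e}"] succ(2) by fastforce
  qed
  then show ?thesis
    by (auto simp: chain_code_def prefix_images_def PiE_iff)
qed

lemma card_prefix_chains_le:
  assumes E: "E \<subseteq> {1..n}" "n \<in> E"
  shows "card (prefix_chains n E) \<le> 2 ^ (\<Sum>e \<in> E - {n}. succ_in E e)"
proof -
  have fin: "finite E" using E finite_subset by blast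
  have "card (prefix_chains n E) \<le> card (\<Pi>\<^sub>E e \<in> E - {n}. Pow {1..succ_in E e})"
    using chain_code_inj[OF E] chain_code_in_PiE[OF E] fin
    by (intro card_inj_on_le) (auto simp: prefix_chains_def intro!: finite_PiE)
  also have "\<dots> = 2 ^ (\<Sum>e \<in> E - {n}. succ_in E e)"
    using fin by (simp add: card_PiE card_Pow power_sum)
  finally show ?thesis .
qed

definition powers_of_two_upto :: "nat \<Rightarrow> nat set" where
  "powers_of_two_upto n = {e. \<exists>t. e = 2 ^ t \<and> e \<le> n}"

definition checkpoints :: "nat \<Rightarrow> nat \<Rightarrow> nat set" where
  "checkpoints n k = powers_of_two_upto n \<union> {k, n}"

lemma exp2_Suc_floor_log_bounds:
  assumes "0 < r"
  shows "r < 2 ^ Suc (floor_log r)" "2 ^ Suc (floor_log r) \<le> 2 * r"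
  using floor_log_exp2_gt[of r] floor_log_exp2_le[OF assms] by simp_all

lemma sum_powers_of_two_upto_le: "\<Sum>(powers_of_two_upto n) \<le> 2 * n"
proof (cases "n = 0")
  case True
  then show ?thesis by (simp add: powers_of_two_upto_def)
next
  case False
  define m where "m = Suc (floor_log n)"
  have "powers_of_two_upto n \<subseteq> (\<lambda>t. 2 ^ t) ` {..<m}"
    using floor_log_le_iff unfolding powers_of_two_upto_def m_def
    by (force simp: less_Suc_eq_le)
  then have "\<Sum>(powers_of_two_upto n) \<le> \<Sum>((\<lambda>t. 2 ^ t) ` {..<m})"
    by (intro sum_mono2) auto
  also have "\<dots> = (\<Sum>t<m. 2 ^ t)"
    by (subst sum.reindex) (auto simp: inj_on_def)
  also have "\<dots> < 2 ^ m"
    by (induction m) auto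
  also have "\<dots> \<le> 2 * n"
    using floor_log_exp2_le[of n] False by (simp add: m_def)
  finally show ?thesis by simp
qed

lemma checkpoints_subset:
  assumes "k \<in> {1..n}"
  shows "checkpoints n k \<subseteq> {1..n}"
  using assms by (auto simp: checkpoints_def powers_of_two_upto_def)

lemma succ_in_checkpoints_le:
  assumes k: "k \<in> {1..n}" and e: "e \<in> checkpoints n k" "e < n"
  shows "succ_in (checkpoints n k) e \<le> 2 * e"
proof -
  let ?E = "checkpoints n k"
  have fin: "finite ?E" and "n \<in> ?E"
    using finite_subset[OF checkpoints_subset[OF k]] by (auto simp: checkpoints_def)
  note succ = succ_in_successor[OF this e(2)]
  have "0 < e" using e checkpoints_subset[OF k] by auto
  note q = exp2_Suc_floor_log_bounds[OF this]
  show ?thesis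
  proof (cases "2 ^ Suc (floor_log e) \<le> n")
    case True
    then have "2 ^ Suc (floor_log e) \<in> ?E"
      unfolding checkpoints_def powers_of_two_upto_def by blast
    then show ?thesis using succ(3) q by fastforce
  next
    case False
    then show ?thesis using succ(3)[OF \<open>n \<in> ?E\<close> e(2)] q by linarith
  qed
qed

lemma sum_succ_in_checkpoints_le:
  assumes k: "k \<in> {1..n}"
  shows "(\<Sum>e \<in> checkpoints n k - {n}. succ_in (checkpoints n k) e) \<le> 8 * n"
proof -
  let ?E = "checkpoints n k"
  have fin: "finite ?E" using finite_subset[OF checkpoints_subset[OF k]] by auto
  have "(\<Sum>e \<in> ?E - {n}. succ_in ?E e) \<le> (\<Sum>e \<in> ?E - {n}. 2 * e)"
    using succ_in_checkpoints_le[OF k] checkpoints_subset[OF k] by (intro sum_mono) fastforce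
  also have "\<dots> \<le> 2 * \<Sum>?E"
    using fin by (simp add: sum_distrib_left[symmetric] sum_mono2)
  also have "\<Sum>?E \<le> \<Sum>(powers_of_two_upto n) + \<Sum>{k, n}"
    unfolding checkpoints_def by (rule sum_Un_nat[THEN eq_imp_le, THEN le_trans]) (auto simp: powers_of_two_upto_def)
  also have "\<Sum>{k, n} \<le> k + n" by (cases "k = n") auto
  finally show ?thesis using sum_powers_of_two_upto_le[of n] k by auto
qed

definition chain_representatives :: "nat \<Rightarrow> nat set \<Rightarrow> (nat \<Rightarrow> nat) set" where
  "chain_representatives n E =
     inv_into {\<tau>. \<tau> permutes {1..n}} (\<lambda>\<tau>. prefix_images \<tau> E) ` prefix_chains n E"

definition perm_family :: "nat \<Rightarrow> (nat \<Rightarrow> nat) set" where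
  "perm_family n = (\<Union>k \<in> {1..n}. chain_representatives n (checkpoints n k))"

lemma chain_representatives_permutes:
  assumes "\<sigma> \<in> chain_representatives n E"
  shows "\<sigma> permutes {1..n}"
proof -
  from assms obtain \<tau> where "\<tau> permutes {1..n}"
    and \<sigma>: "\<sigma> = inv_into {\<tau>. \<tau> permutes {1..n}} (\<lambda>\<tau>. prefix_images \<tau> E) (prefix_images \<tau> E)"
    unfolding chain_representatives_def prefix_chains_def by blast
  then have "prefix_images \<tau> E \<in> (\<lambda>\<tau>. prefix_images \<tau> E) ` {\<tau>. \<tau> permutes {1..n}}"
    by blast
  from inv_into_into[OF this] show ?thesis
    unfolding \<sigma> by simp
qed

lemma chain_representative_exists:
  assumes "\<tau> permutes {1..n}"
  obtains \<sigma> where "\<sigma> \<in> chain_representatives n E" "prefix_images \<sigma> E = prefix_images \<tau> E"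
proof
  let ?\<sigma> = "inv_into {\<tau>. \<tau> permutes {1..n}} (\<lambda>\<tau>. prefix_images \<tau> E) (prefix_images \<tau> E)"
  show "?\<sigma> \<in> chain_representatives n E"
    unfolding chain_representatives_def prefix_chains_def using assms by blast
  show "prefix_images ?\<sigma> E = prefix_images \<tau> E"
    using assms by (intro f_inv_into_f[where f = "\<lambda>\<tau>. prefix_images \<tau> E"]) blast
qed

lemma finite_prefix_chains: "finite (prefix_chains n E)"
  unfolding prefix_chains_def by (intro finite_imageI finite_permutations) simp

lemma finite_chain_representatives: "finite (chain_representatives n E)"
  unfolding chain_representatives_def by (intro finite_imageI finite_prefix_chains)

lemma card_chain_representatives_le:
  assumes "E \<subseteq> {1..n}" "n \<in> E"
  shows "card (chain_representatives n E) \<le> 2 ^ (\<Sum>e \<in> E - {n}. succ_in E e)"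
proof -
  have "card (chain_representatives n E) \<le> card (prefix_chains n E)"
    unfolding chain_representatives_def by (intro card_image_le finite_prefix_chains)
  with card_prefix_chains_le[OF assms] show ?thesis by linarith
qed

lemma perm_family_permutes: "\<sigma> \<in> perm_family n \<Longrightarrow> \<sigma> permutes {1..n}"
  unfolding perm_family_def using chain_representatives_permutes by blast

lemma finite_perm_family: "finite (perm_family n)"
  unfolding perm_family_def by (simp add: finite_chain_representatives)

lemma card_perm_family_le: "card (perm_family n) \<le> 512 ^ n"
proof -
  have "card (perm_family n) \<le> (\<Sum>k \<in> {1..n}. card (chain_representatives n (checkpoints n k)))"
    unfolding perm_family_def by (rule card_UN_le) simp
  also have "\<dots> \<le> (\<Sum>k \<in> {1..n}. 2 ^ (8 * n))"
  proof (rule sum_mono)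
    fix k assume k: "k \<in> {1..n}"
    then have "checkpoints n k \<subseteq> {1..n}" "n \<in> checkpoints n k"
      using checkpoints_subset by (auto simp: checkpoints_def)
    from card_chain_representatives_le[OF this]
    show "card (chain_representatives n (checkpoints n k)) \<le> 2 ^ (8 * n)"
      using power_increasing[OF sum_succ_in_checkpoints_le[OF k], of "2::nat"] by linarith
  qed
  also have "\<dots> = n * 2 ^ (8 * n)" by simp
  also have "\<dots> \<le> 2 ^ n * 2 ^ (8 * n)" using less_exp[of n] by simp
  also have "\<dots> = 2 ^ (9 * n)" by (simp flip: power_add)
  also have "\<dots> = 512 ^ n" by (simp add: power_mult)
  finally show ?thesis .
qed

lemma position_le_twice_rank:
  fixes \<sigma> \<tau> :: "nat \<Rightarrow> nat"
  assumes \<sigma>: "\<sigma> permutes {1..n}"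
    and agree: "\<forall>e \<in> powers_of_two_upto n. \<sigma> ` {1..e} = \<tau> ` {1..e}"
    and "i \<le> n" "1 \<le> r" "\<sigma> i = \<tau> r"
  shows "i \<le> 2 * r"
proof (rule ccontr)
  assume "\<not> i \<le> 2 * r"
  define q :: nat where "q = 2 ^ Suc (floor_log r)"
  have q: "r < q" "q \<le> 2 * r"
    using exp2_Suc_floor_log_bounds[of r] \<open>1 \<le> r\<close> by (simp_all add: q_def)
  with \<open>\<not> i \<le> 2 * r\<close> \<open>i \<le> n\<close> have "q \<le> n" by linarith
  then have "q \<in> powers_of_two_upto n"
    unfolding powers_of_two_upto_def q_def by blast
  moreover have "\<tau> r \<in> \<tau> ` {1..q}"
    using q(1) \<open>1 \<le> r\<close> by simp
  ultimately have "\<sigma> i \<in> \<sigma> ` {1..q}"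
    using agree \<open>\<sigma> i = \<tau> r\<close> by simp
  then have "i \<le> q"
    using inj_image_mem_iff[OF permutes_inj[OF \<sigma>]] by simp
  with q(2) \<open>\<not> i \<le> 2 * r\<close> show False by simp
qed

lemma sorted_sq_le_sum:
  fixes x :: "nat \<Rightarrow> real"
  assumes \<tau>: "\<tau> permutes {1..n}"
    and sorted: "antimono_on {1..n} (\<lambda>r. \<bar>x (\<tau> r)\<bar>)"
    and r: "r \<in> {1..n}"
  shows "real r * (x (\<tau> r))\<^sup>2 \<le> (\<Sum>c \<in> {1..n}. (x c)\<^sup>2)"
proof -
  have "real r * (x (\<tau> r))\<^sup>2 = (\<Sum>r' \<in> {1..r}. (x (\<tau> r))\<^sup>2)" by simp
  also have "\<dots> \<le> (\<Sum>r' \<in> {1..r}. (x (\<tau> r'))\<^sup>2)"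
    using monotone_onD[OF sorted] r by (intro sum_mono) (auto simp: abs_le_square_iff[symmetric])
  also have "\<dots> = (\<Sum>c \<in> \<tau> ` {1..r}. (x c)\<^sup>2)"
    by (simp add: sum.reindex permutes_inj_on[OF \<tau>])
  also have "\<dots> \<le> (\<Sum>c \<in> {1..n}. (x c)\<^sup>2)"
    using r permutes_image[OF \<tau>] by (intro sum_mono2) auto
  finally show ?thesis .
qed

lemma sorted_prefix_subset:
  fixes g :: "nat \<Rightarrow> 'a::linorder"
  assumes \<tau>: "\<tau> permutes {1..n}"
    and sorted: "antimono_on {1..n} (\<lambda>r. g (\<tau> r))"
    and k: "k \<le> card {c \<in> {1..n}. a < g c}"
  shows "\<tau> ` {1..k} \<subseteq> {c \<in> {1..n}. a < g c}"
proof (rule ccontr)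
  define M where "M = {c \<in> {1..n}. a < g c}"
  assume "\<not> ?thesis"
  then have "\<not> \<tau> ` {1..k} \<subseteq> M" by (simp add: M_def)
  then obtain r where r: "r \<in> {1..k}" "\<tau> r \<notin> M" by blast
  have "card M \<le> card {1..n}" unfolding M_def by (intro card_mono) auto
  with k r have r_n: "r \<in> {1..n}" by (simp add: M_def)
  then have "\<tau> r \<in> {1..n}" by (simp only: permutes_in_image[OF \<tau>])
  with r(2) have small: "g (\<tau> r) \<le> a" by (simp add: M_def not_less)
  have "M \<subseteq> \<tau> ` {1..r - 1}"
  proof
    fix c assume c: "c \<in> M"
    then have "c \<in> \<tau> ` {1..n}" unfolding permutes_image[OF \<tau>] by (simp add: M_def)
    then obtain r' where r': "r' \<in> {1..n}" "c = \<tau> r'" by blast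
    have "r' < r"
    proof (rule ccontr)
      assume "\<not> r' < r"
      then have "g c \<le> a" using monotone_onD[OF sorted r_n r'(1)] small r'(2) by simp
      with c show False unfolding M_def using leD by blast
    qed
    with r' show "c \<in> \<tau> ` {1..r - 1}" by auto
  qed
  then have "card M \<le> card (\<tau> ` {1..r - 1})" by (intro card_mono) simp_all
  also have "\<dots> \<le> r - 1" using card_image_le[of "{1..r - 1}" \<tau>] by simp
  finally show False using k r(1) unfolding M_def atLeastAtMost_iff by linarith
qed

lemma unit_sphere_dim_pos:
  assumes "x \<in> unit_sphere n"
  shows "0 < n"
proof (rule ccontr)
  assume "\<not> 0 < n"
  with assms show False by (simp add: unit_sphere_def)
qed

lemma Incomp_card_large_coordinates:
  assumes x: "x \<in> Incomp n \<delta> \<nu>" and \<nu>: "0 < \<nu>"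
  shows "\<delta> * real n < real (card {c \<in> {1..n}. \<nu> / sqrt n < \<bar>x c\<bar>})"
proof (rule ccontr)
  define M where "M = {c \<in> {1..n}. \<nu> / sqrt n < \<bar>x c\<bar>}"
  assume "\<not> ?thesis"
  then have card_M: "real (card M) \<le> \<delta> * real n" by (simp add: M_def)
  have sphere: "x \<in> unit_sphere n" and not_comp: "x \<notin> Comp n \<delta> \<nu>"
    using x by (auto simp: Incomp_def)
  have "n \<noteq> 0" using unit_sphere_dim_pos[OF sphere] by simp
  define y where "y i = (if i \<in> M then x i else 0)" for i
  have "{i \<in> {1..n}. y i \<noteq> 0} \<subseteq> M" by (auto simp: y_def M_def)
  then have "card {i \<in> {1..n}. y i \<noteq> 0} \<le> card M"
    by (rule card_mono[rotated]) (simp add: M_def)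
  with card_M have sparse: "real (card {i \<in> {1..n}. y i \<noteq> 0}) \<le> \<delta> * real n"
    by linarith
  have "(x i - y i)\<^sup>2 \<le> (\<nu> / sqrt n)\<^sup>2" if "i \<in> {1..n}" for i
    using that \<nu> by (auto simp: y_def M_def abs_le_square_iff[symmetric])
  then have "(\<Sum>i \<in> {1..n}. (x i - y i)\<^sup>2) \<le> (\<Sum>i \<in> {1..n}. (\<nu> / sqrt n)\<^sup>2)"
    by (rule sum_mono)
  also have "\<dots> = \<nu>\<^sup>2" using \<open>n \<noteq> 0\<close> by (simp add: power_divide)
  finally have "sqrt (\<Sum>i \<in> {1..n}. (x i - y i)\<^sup>2) \<le> \<nu>"
    using \<nu> real_le_lsqrt by auto
  with sparse sphere not_comp show False unfolding Comp_def by blast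
qed

lemma scaled_approx_abs_bounds:
  fixes a t T :: real and y :: int
  assumes approx: "\<bar>a / t - of_int y\<bar> \<le> 1" and T: "0 < T" "T / 2 \<le> t" "t \<le> T"
  shows "of_int \<bar>y\<bar> \<le> 2 * \<bar>a\<bar> / T + 1" and "\<bar>a\<bar> / T - 1 \<le> of_int \<bar>y\<bar>"
proof -
  have t: "0 < t" using T by linarith
  have "\<bar>a\<bar> * (1 / t) \<le> \<bar>a\<bar> * (2 / T)"
    using T t by (intro mult_left_mono) (simp_all add: field_simps)
  then have "\<bar>a\<bar> / t \<le> 2 * \<bar>a\<bar> / T" by (simp add: mult.commute)
  moreover have "\<bar>a\<bar> / T \<le> \<bar>a\<bar> / t"
    using T t by (simp add: divide_left_mono)
  moreover have "\<bar>\<bar>a\<bar> / t - of_int \<bar>y\<bar>\<bar> \<le> 1"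
    using abs_triangle_ineq3[of "a / t" "of_int y"] approx t by simp
  ultimately show "of_int \<bar>y\<bar> \<le> 2 * \<bar>a\<bar> / T + 1" "\<bar>a\<bar> / T - 1 \<le> of_int \<bar>y\<bar>"
    by linarith+
qed

lemma exists_dyadic_block:
  fixes D :: real
  assumes i: "2 \<le> i" "real i \<le> D"
  obtains j :: nat where "1 \<le> j" "real j \<le> log 2 D" "D / 2 ^ j < real i" "real i \<le> D / 2 ^ (j - 1)"
proof -
  define m where "m = nat \<lfloor>D / i\<rfloor>"
  define t where "t = floor_log m"
  have "1 \<le> D / i" using i by (simp add: field_simps)
  then have m: "0 < m" "real m \<le> D / i" "D / i < real m + 1"
    unfolding m_def by linarith+
  have "2 ^ t \<le> m" "m + 1 \<le> 2 * 2 ^ t"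
    using floor_log_exp2_le[OF m(1)] floor_log_exp2_gt[of m] by (simp_all add: t_def)
  then have "real (2 ^ t) \<le> real m" "real (m + 1) \<le> real (2 * 2 ^ t)"
    by (simp_all only: of_nat_le_iff)
  then have "(2::real) ^ t \<le> real m" "real m + 1 \<le> 2 * 2 ^ t"
    by simp_all
  with m have t_le: "(2::real) ^ t \<le> D / i" and t_gt: "D / i < 2 * 2 ^ t"
    by linarith+
  show ?thesis
  proof
    show "1 \<le> Suc t" by simp
    have "(2::real) * 2 ^ t \<le> real i * 2 ^ t"
      using i by (intro mult_right_mono) simp_all
    also have "\<dots> \<le> D"
      using t_le i by (simp add: field_simps)
    finally have "(2::real) ^ Suc t \<le> D"
      by simp
    then have "2 powr real (Suc t) \<le> D"
      by (subst powr_realpow) simp_all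
    with i show "real (Suc t) \<le> log 2 D"
      using le_log_iff[of 2 D "real (Suc t)"] by simp
    show "D / 2 ^ Suc t < real i" "real i \<le> D / 2 ^ (Suc t - 1)"
      using t_gt t_le i by (simp_all add: field_simps)
  qed
qed

lemma abs_le_ceiling_plus_one:
  fixes y :: int and A B :: real
  assumes "of_int \<bar>y\<bar> \<le> A + 1" "A \<le> B"
  shows "\<bar>y\<bar> \<le> \<lceil>B\<rceil> + 1"
proof -
  have "of_int \<bar>y\<bar> \<le> (of_int (\<lceil>B\<rceil> + 1) :: real)"
    using assms le_of_int_ceiling[of B] by (simp, linarith)
  then show ?thesis by (simp only: of_int_le_iff)
qed

lemma floor_window_excluded:
  fixes y :: int and a :: real
  assumes "a - 1 < of_int \<bar>y\<bar>"
  shows "\<not> (1 - \<lfloor>a\<rfloor> \<le> y \<and> y \<le> \<lfloor>a\<rfloor> - 1)"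
proof
  assume "1 - \<lfloor>a\<rfloor> \<le> y \<and> y \<le> \<lfloor>a\<rfloor> - 1"
  then have "\<bar>y\<bar> \<le> \<lfloor>a\<rfloor> - 1" by linarith
  then have "of_int \<bar>y\<bar> \<le> a - 1"
    using of_int_floor_le[of a] by (smt (verit) of_int_diff of_int_le_iff of_int_1)
  with assms show False by linarith
qed

lemma scaled_le_sqrt_div:
  fixes n \<delta> T Q a :: real
  assumes "0 < T" "0 < \<delta>" "0 \<le> n" "n * \<delta> * a\<^sup>2 \<le> 2 * Q"
  shows "2 * sqrt n * a / T \<le> sqrt (8 * Q) / (sqrt \<delta> * T)"
proof -
  have "(2 * sqrt n * sqrt \<delta>) * a \<le> (2 * sqrt n * sqrt \<delta>) * \<bar>a\<bar>"
    using assms by (intro mult_left_mono) simp_all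
  then have "2 * sqrt n * a * sqrt \<delta> \<le> sqrt ((2 * a)\<^sup>2 * n * \<delta>)"
    by (simp add: real_sqrt_mult ac_simps)
  also have "\<dots> \<le> sqrt (8 * Q)"
    using assms by (intro real_sqrt_le_mono) (simp add: power_mult_distrib algebra_simps)
  finally show ?thesis
    using assms by (simp add: field_simps)
qed

lemma sqrt_eight_mult_power2: "sqrt (8 * 2 ^ j) = (2::real) powr ((real j + 3) / 2)"
proof -
  have "(8::real) * 2 ^ j = 2 ^ (j + 3)" by (simp add: power_add)
  also have "\<dots> = 2 powr (real j + 3)" by (simp add: powr_realpow[symmetric])
  finally have "sqrt (8 * 2 ^ j) = (2 powr (real j + 3)) powr (1 / 2)"
    by (simp add: powr_half_sqrt)
  also have "\<dots> = 2 powr ((real j + 3) / 2)" by (simp add: powr_powr)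
  finally show ?thesis .
qed

lemma in_A_of_profile:
  fixes y :: "nat \<Rightarrow> int" and a :: "nat \<Rightarrow> real"
  assumes T: "0 < T" and \<delta>n: "1 \<le> \<delta> * real n"
    and upper: "\<And>i. i \<in> {1..n} \<Longrightarrow> of_int \<bar>y i\<bar> \<le> 2 * sqrt n * a i / T + 1"
    and a_le_1: "\<And>i. i \<in> {1..n} \<Longrightarrow> a i \<le> 1"
    and decay: "\<And>i. i \<in> {1..n} \<Longrightarrow> real i * (a i)\<^sup>2 \<le> 2"
    and away: "\<And>i. i \<in> {1..n} \<Longrightarrow> real i \<le> \<delta> * real n \<Longrightarrow> \<nu> / T - 1 < of_int \<bar>y i\<bar>"
  shows "in_A n \<delta> \<nu> T y"
  unfolding in_A_def Let_def
proof
  fix i assume i: "i \<in> {1..n}"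
  have "0 < \<delta> * real n" using \<delta>n by linarith
  then have \<delta>: "0 < \<delta>" by (simp add: zero_less_mult_iff)
  have excluded: "\<not> (1 - \<lfloor>\<nu> / T\<rfloor> \<le> y i \<and> y i \<le> \<lfloor>\<nu> / T\<rfloor> - 1)" if "real i \<le> \<delta> * real n"
    by (rule floor_window_excluded[OF away[OF i that]])
  have bounded: "\<bar>y i\<bar> \<le> \<lceil>sqrt (8 * Q) / (sqrt \<delta> * T)\<rceil> + 1" if "real n * \<delta> * (a i)\<^sup>2 \<le> 2 * Q" for Q
    using abs_le_ceiling_plus_one[OF upper[OF i] scaled_le_sqrt_div[OF T \<delta> _ that]] by simp
  have "i = 1 \<or> (i \<noteq> 1 \<and> \<delta> * real n < real i) \<or> (2 \<le> i \<and> real i \<le> \<delta> * real n)"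
    using i by auto
  then consider "i = 1" | "i \<noteq> 1" "\<delta> * real n < real i" | "2 \<le> i" "real i \<le> \<delta> * real n"
    by blast
  then show "if i = 1 then \<bar>y i\<bar> \<le> \<lceil>2 * sqrt n / T\<rceil> + 1 \<and> \<not> (1 - \<lfloor>\<nu> / T\<rfloor> \<le> y i \<and> y i \<le> \<lfloor>\<nu> / T\<rfloor> - 1)
    else if \<delta> * real n < real i then \<bar>y i\<bar> \<le> \<lceil>sqrt 8 / (sqrt \<delta> * T)\<rceil> + 1
    else \<exists>j. 1 \<le> j \<and> real j \<le> log 2 (\<delta> * real n) \<and>
      \<delta> * real n / 2 ^ j < real i \<and> real i \<le> \<delta> * real n / 2 ^ (j - 1) \<and>
      \<bar>y i\<bar> \<le> \<lceil>2 powr ((real j + 3) / 2) / (sqrt \<delta> * T)\<rceil> + 1 \<and>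
      \<not> (1 - \<lfloor>\<nu> / T\<rfloor> \<le> y i \<and> y i \<le> \<lfloor>\<nu> / T\<rfloor> - 1)"
  proof cases
    case 1
    have "2 * sqrt n * a i / T \<le> 2 * sqrt n / T"
      using a_le_1[OF i] T by (simp add: divide_right_mono mult_left_le)
    with 1 \<delta>n show ?thesis
      using abs_le_ceiling_plus_one[OF upper[OF i]] excluded by simp
  next
    case 2
    have "real n * \<delta> * (a i)\<^sup>2 \<le> real i * (a i)\<^sup>2"
      using 2 by (intro mult_right_mono) (simp_all add: mult.commute)
    with decay[OF i] have "real n * \<delta> * (a i)\<^sup>2 \<le> 2 * 1" by linarith
    with 2 show ?thesis using bounded[of 1] by simp
  next
    case 3
    then obtain j :: nat where j: "1 \<le> j" "real j \<le> log 2 (\<delta> * real n)"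
      "\<delta> * real n / 2 ^ j < real i" "real i \<le> \<delta> * real n / 2 ^ (j - 1)"
      by (rule exists_dyadic_block)
    have "real n * \<delta> * (a i)\<^sup>2 \<le> 2 ^ j * real i * (a i)\<^sup>2"
      using j(3) by (intro mult_right_mono) (simp_all add: field_simps)
    also have "\<dots> = 2 ^ j * (real i * (a i)\<^sup>2)"
      by (simp only: mult.assoc)
    also have "\<dots> \<le> 2 ^ j * 2"
      by (rule mult_left_mono[OF decay[OF i]]) simp
    also have "\<dots> = 2 * 2 ^ j"
      by simp
    finally have "\<bar>y i\<bar> \<le> \<lceil>2 powr ((real j + 3) / 2) / (sqrt \<delta> * T)\<rceil> + 1"
      by (rule bounded[of "2 ^ j", unfolded sqrt_eight_mult_power2])
    moreover have "i \<noteq> 1" "\<not> \<delta> * real n < real i"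
      using 3 by auto
    ultimately show ?thesis
      using j excluded[OF 3(2)] by (auto intro!: exI[of _ j])
  qed
qed

lemma Y_coordinate_bounds:
  assumes "Y_props C1 c1 Y" "0 < p" "p \<le> 1/2" "-1 \<le> s" "s \<le> 0" "x \<in> unit_sphere n" "1 \<le> L"
    and T: "0 < T" "T / 2 \<le> threshold n p x L" "threshold n p x L \<le> T" and "c \<in> {1..n}"
  shows "of_int \<bar>Y n p x L s c\<bar> \<le> 2 * sqrt n * \<bar>x c\<bar> / T + 1"
    and "sqrt n * \<bar>x c\<bar> / T - 1 \<le> of_int \<bar>Y n p x L s c\<bar>"
proof -
  have "\<bar>sqrt n * x c / threshold n p x L - of_int (Y n p x L s c)\<bar> \<le> 1"
    using assms unfolding Y_props_def Let_def by auto
  from scaled_approx_abs_bounds[OF this T]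
  show "of_int \<bar>Y n p x L s c\<bar> \<le> 2 * sqrt n * \<bar>x c\<bar> / T + 1"
    and "sqrt n * \<bar>x c\<bar> / T - 1 \<le> of_int \<bar>Y n p x L s c\<bar>"
    by (simp_all add: abs_mult)
qed

lemma agreeing_perm_sq_bounds:
  fixes x :: "nat \<Rightarrow> real"
  assumes \<tau>: "\<tau> permutes {1..n}"
    and sorted: "antimono_on {1..n} (\<lambda>r. \<bar>x (\<tau> r)\<bar>)"
    and \<sigma>: "\<sigma> permutes {1..n}"
    and agree: "\<forall>e \<in> powers_of_two_upto n. \<sigma> ` {1..e} = \<tau> ` {1..e}"
    and i: "i \<in> {1..n}"
  shows "real i * (x (\<sigma> i))\<^sup>2 \<le> 2 * (\<Sum>c \<in> {1..n}. (x c)\<^sup>2)"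
    and "(x (\<sigma> i))\<^sup>2 \<le> (\<Sum>c \<in> {1..n}. (x c)\<^sup>2)"
proof -
  have "\<sigma> i \<in> \<tau> ` {1..n}"
    using i by (simp only: permutes_in_image[OF \<sigma>] permutes_image[OF \<tau>])
  then obtain r where r: "r \<in> {1..n}" "\<sigma> i = \<tau> r" by blast
  have "i \<le> 2 * r"
    using position_le_twice_rank[OF \<sigma> agree] i r by simp
  then have "real i \<le> 2 * real r" by linarith
  then have "real i * (x (\<sigma> i))\<^sup>2 \<le> 2 * (real r * (x (\<sigma> i))\<^sup>2)"
    using mult_right_mono[of "real i" "2 * real r" "(x (\<sigma> i))\<^sup>2"] by simp
  moreover have "real r * (x (\<sigma> i))\<^sup>2 \<le> (\<Sum>c \<in> {1..n}. (x c)\<^sup>2)"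
    using sorted_sq_le_sum[OF \<tau> sorted r(1)] r(2) by simp
  moreover have "(x (\<sigma> i))\<^sup>2 \<le> real r * (x (\<sigma> i))\<^sup>2"
    using r(1) by (simp add: mult_le_cancel_right1)
  ultimately show "real i * (x (\<sigma> i))\<^sup>2 \<le> 2 * (\<Sum>c \<in> {1..n}. (x c)\<^sup>2)"
    and "(x (\<sigma> i))\<^sup>2 \<le> (\<Sum>c \<in> {1..n}. (x c)\<^sup>2)"
    by linarith+
qed

lemma in_A_of_agreeing_perm:
  assumes Y: "Y_props C1 c1 Y" and p: "0 < p" "p \<le> 1/2" and s: "-1 \<le> s" "s \<le> 0" and L: "1 \<le> L"
    and T: "0 < T" "T / 2 \<le> threshold n p x L" "threshold n p x L \<le> T"
    and sphere: "x \<in> unit_sphere n" and \<delta>n: "1 \<le> \<delta> * real n"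
    and \<tau>: "\<tau> permutes {1..n}" and sorted: "antimono_on {1..n} (\<lambda>r. \<bar>x (\<tau> r)\<bar>)"
    and \<sigma>: "\<sigma> permutes {1..n}" and agree: "\<forall>e \<in> powers_of_two_upto n. \<sigma> ` {1..e} = \<tau> ` {1..e}"
    and large: "\<sigma> ` {1..nat \<lfloor>\<delta> * real n\<rfloor>} \<subseteq> {c. \<nu> / sqrt n < \<bar>x c\<bar>}"
  shows "in_A n \<delta> \<nu> T (\<lambda>i. Y n p x L s (\<sigma> i))"
proof (rule in_A_of_profile[OF T(1) \<delta>n, where a = "\<lambda>i. \<bar>x (\<sigma> i)\<bar>"])
  fix i assume i: "i \<in> {1..n}"
  have norm: "(\<Sum>c \<in> {1..n}. (x c)\<^sup>2) = 1" using sphere by (simp add: unit_sphere_def)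
  note bounds = agreeing_perm_sq_bounds[OF \<tau> sorted \<sigma> agree i, unfolded norm]
  show "real i * \<bar>x (\<sigma> i)\<bar>\<^sup>2 \<le> 2" "\<bar>x (\<sigma> i)\<bar> \<le> 1"
    using bounds by (simp_all add: abs_square_le_1)
  have "\<sigma> i \<in> {1..n}" using i by (simp only: permutes_in_image[OF \<sigma>])
  note Y_bounds = Y_coordinate_bounds[OF Y p s sphere L T this]
  show "of_int \<bar>Y n p x L s (\<sigma> i)\<bar> \<le> 2 * sqrt n * \<bar>x (\<sigma> i)\<bar> / T + 1"
    by (fact Y_bounds(1))
  assume "real i \<le> \<delta> * real n"
  then have "i \<le> nat \<lfloor>\<delta> * real n\<rfloor>" by linarith
  with i have "\<sigma> i \<in> \<sigma> ` {1..nat \<lfloor>\<delta> * real n\<rfloor>}" by (intro imageI) simp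
  with large have "\<nu> / sqrt n < \<bar>x (\<sigma> i)\<bar>" by blast
  then have "\<nu> / T < sqrt n * \<bar>x (\<sigma> i)\<bar> / T"
    using T unit_sphere_dim_pos[OF sphere] by (simp add: field_simps)
  with Y_bounds(2) show "\<nu> / T - 1 < of_int \<bar>Y n p x L s (\<sigma> i)\<bar>" by linarith
qed

lemma exists_perm_family_in_A:
  assumes Y: "Y_props C1 c1 Y"
    and p: "0 < p" "p \<le> 1/2" and \<delta>: "1 / real n \<le> \<delta>" "\<delta> \<le> 1/2" and s: "-1 \<le> s" "s \<le> 0"
    and \<nu>: "0 < \<nu>" and L: "1 \<le> L" and T: "0 < T" "T / 2 \<le> threshold n p x L" "threshold n p x L \<le> T"
    and x: "x \<in> Incomp n \<delta> \<nu>"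
  shows "\<exists>\<sigma> \<in> perm_family n. in_A n \<delta> \<nu> T (\<lambda>i. Y n p x L s (\<sigma> i))"
proof -
  have sphere: "x \<in> unit_sphere n" using x by (simp add: Incomp_def)
  have \<delta>n: "1 \<le> \<delta> * real n"
    using \<delta>(1) unit_sphere_dim_pos[OF sphere] by (simp add: field_simps)
  obtain \<tau> where \<tau>: "\<tau> permutes {1..n}" and "mono_on {1..n} (\<lambda>r. - \<bar>x (\<tau> r)\<bar>)"
    by (rule permutes_sorting)
  then have sorted: "antimono_on {1..n} (\<lambda>r. \<bar>x (\<tau> r)\<bar>)"
    by (auto simp: monotone_on_def)
  define k where "k = nat \<lfloor>\<delta> * real n\<rfloor>"
  have "\<delta> * real n \<le> real n" using \<delta>(2) mult_right_mono[of \<delta> 1 "real n"] by simp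
  then have "\<lfloor>\<delta> * real n\<rfloor> \<le> int n" using floor_mono by fastforce
  then have k: "k \<in> {1..n}" and "real k \<le> \<delta> * real n"
    using \<delta>n le_nat_floor[of 1] of_nat_floor[of "\<delta> * real n"] unfolding k_def by auto
  then have "real k < real (card {c \<in> {1..n}. \<nu> / sqrt n < \<bar>x c\<bar>})"
    using Incomp_card_large_coordinates[OF x \<nu>] by linarith
  then have "k \<le> card {c \<in> {1..n}. \<nu> / sqrt n < \<bar>x c\<bar>}" by simp
  then have large: "\<tau> ` {1..k} \<subseteq> {c \<in> {1..n}. \<nu> / sqrt n < \<bar>x c\<bar>}"
    by (rule sorted_prefix_subset[where g = "\<lambda>c. \<bar>x c\<bar>", OF \<tau> sorted])
  obtain \<sigma> where \<sigma>: "\<sigma> \<in> chain_representatives n (checkpoints n k)"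
    and agree: "prefix_images \<sigma> (checkpoints n k) = prefix_images \<tau> (checkpoints n k)"
    by (rule chain_representative_exists[OF \<tau>])
  have agree_on: "\<sigma> ` {1..e} = \<tau> ` {1..e}" if "e \<in> checkpoints n k" for e
    using fun_cong[OF agree, of e] that by (simp add: prefix_images_def)
  have "\<sigma> \<in> perm_family n"
    using \<sigma> k unfolding perm_family_def by blast
  moreover have "in_A n \<delta> \<nu> T (\<lambda>i. Y n p x L s (\<sigma> i))"
    using agree_on large
    by (intro in_A_of_agreeing_perm[OF Y p s L T sphere \<delta>n \<tau> sorted chain_representatives_permutes[OF \<sigma>]])
       (auto simp: checkpoints_def k_def)
  ultimately show ?thesis by blast
qed

theorem corollary5p4:
  "\<forall>C1 c1 :: real. C1 > 0 \<and> c1 > 0 \<longrightarrow>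
   (\<exists>C0 :: real. C0 > 0 \<and>
     (\<forall>Y. Y_props C1 c1 Y \<longrightarrow>
       (\<forall>n::nat. n \<ge> 2 \<longrightarrow>
         (\<exists>PP :: (nat \<Rightarrow> nat) set. (\<forall>\<sigma>\<in>PP. \<sigma> permutes {1..n}) \<and> finite PP \<and>
            real (card PP) \<le> C0 ^ n \<and>
            (\<forall>p \<delta> s \<nu> L T x. 0 < p \<and> p \<le> 1/2 \<and> 1 / real n \<le> \<delta> \<and> \<delta> \<le> 1/2 \<and>
               -1 \<le> s \<and> s \<le> 0 \<and> 0 < \<nu> \<and> \<nu> \<le> 1 \<and> L \<ge> 1 \<and> T > 0 \<and>
               x \<in> Incomp n \<delta> \<nu> \<and> T / 2 \<le> threshold n p x L \<and> threshold n p x L \<le> T \<longrightarrow>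
               (\<exists>\<sigma>\<in>PP. in_A n \<delta> \<nu> T (\<lambda>i. Y n p x L s (\<sigma> i))))))))"
proof (intro allI impI exI[of _ 512] conjI, goal_cases)
  case 1
  show ?case by simp
next
  case (2 C1 c1 Y n)
  then have Y: "Y_props C1 c1 Y" by blast
  have card: "real (card (perm_family n)) \<le> 512 ^ n"
    using card_perm_family_le[of n] by (metis of_nat_le_iff of_nat_numeral of_nat_power)
  show ?case
    using perm_family_permutes finite_perm_family card exists_perm_family_in_A[OF Y]
    by (intro exI[of _ "perm_family n"]) blast
qed

end
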